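(* Let $N$ be a nontrivial normal subgroup of $G_2$. If $\phi(N)\simeq S_8$, then $N=G_2$.
   Context: The $2\times2\times2$ Rubik's cube consists of 8 corner cubelets, each carrying 3 colored stickers. Corner positions are numbered 1 = top-front-left, 2 = top-front-right, 3 = top-back-left, 4 = top-back-right, 5 = bottom-front-left, 6 = bottom-front-right, 7 = bottom-back-left, 8 = bottom-back-right. $G_2$ is the subgroup of the symmetric group on the 24 stickers generated by the six moves $u,d,f,b,l,r$ rotating respectively the top, bottom, front, back, left, right layer of four cubelets by $90^\circ$ clockwise as seen from outside facing that face. $\phi:G_2\to S_8$ records the permutation of corner positions. *)

theory Defs
  imports "HOL-Algebra.Sym_Groups" "HOL-Algebra.Generated_Groups"
begin

text \<open>Faces of the cube (also used as outward normal directions).\<close>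
datatype face = U | D | Fr | Bk | Lf | Rt

definition corner_faces :: "nat \<Rightarrow> face set" where
  "corner_faces c =
     (if c = 1 then {U, Fr, Lf} else if c = 2 then {U, Fr, Rt}
      else if c = 3 then {U, Bk, Lf} else if c = 4 then {U, Bk, Rt}
      else if c = 5 then {D, Fr, Lf} else if c = 6 then {D, Fr, Rt}
      else if c = 7 then {D, Bk, Lf} else if c = 8 then {D, Bk, Rt} else {})"

definition corner_of :: "face set \<Rightarrow> nat" where
  "corner_of S = (THE c. c \<in> {1..8} \<and> corner_faces c = S)"

definition stickers :: "(nat \<times> face) set" where
  "stickers = {(c, X). c \<in> {1..8} \<and> X \<in> corner_faces c}"

text \<open>Action on directions of the quarter turn of face M, clockwise as seen from
  outside facing M.\<close>
fun rot :: "face \<Rightarrow> face \<Rightarrow> face" where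
  "rot U X = (case X of Fr \<Rightarrow> Lf | Lf \<Rightarrow> Bk | Bk \<Rightarrow> Rt | Rt \<Rightarrow> Fr | _ \<Rightarrow> X)"
| "rot D X = (case X of Fr \<Rightarrow> Rt | Rt \<Rightarrow> Bk | Bk \<Rightarrow> Lf | Lf \<Rightarrow> Fr | _ \<Rightarrow> X)"
| "rot Fr X = (case X of U \<Rightarrow> Rt | Rt \<Rightarrow> D | D \<Rightarrow> Lf | Lf \<Rightarrow> U | _ \<Rightarrow> X)"
| "rot Bk X = (case X of U \<Rightarrow> Lf | Lf \<Rightarrow> D | D \<Rightarrow> Rt | Rt \<Rightarrow> U | _ \<Rightarrow> X)"
| "rot Rt X = (case X of Fr \<Rightarrow> U | U \<Rightarrow> Bk | Bk \<Rightarrow> D | D \<Rightarrow> Fr | _ \<Rightarrow> X)"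
| "rot Lf X = (case X of Fr \<Rightarrow> D | D \<Rightarrow> Bk | Bk \<Rightarrow> U | U \<Rightarrow> Fr | _ \<Rightarrow> X)"

definition move :: "face \<Rightarrow> nat \<times> face \<Rightarrow> nat \<times> face" where
  "move M s = (if s \<in> stickers \<and> M \<in> corner_faces (fst s)
               then (corner_of (rot M ` corner_faces (fst s)), rot M (snd s)) else s)"

definition sticker_sym :: "(nat \<times> face \<Rightarrow> nat \<times> face) monoid" where
  "sticker_sym = \<lparr>carrier = {p. p permutes stickers}, mult = (\<circ>), one = id\<rparr>"

definition G2_set :: "(nat \<times> face \<Rightarrow> nat \<times> face) set" where
  "G2_set = generate sticker_sym {move U, move D, move Fr, move Bk, move Lf, move Rt}"

definition G2 :: "(nat \<times> face \<Rightarrow> nat \<times> face) monoid" where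
  "G2 = sticker_sym\<lparr>carrier := G2_set\<rparr>"

definition phi :: "(nat \<times> face \<Rightarrow> nat \<times> face) \<Rightarrow> nat \<Rightarrow> nat" where
  "phi g c = (if c \<in> {1..8} then fst (g (c, if c \<le> 4 then U else D)) else c)"

end

theory Submission
  imports Defs
begin

text \<open>Write every element of \<open>G\<^sub>2\<close> as \<open>corner_config p e\<close>: the cubelet at corner \<open>c\<close> goes to
  \<open>p c\<close> and its orientation is raised by \<open>e c\<close> (mod 3); all generators, hence all of \<open>G\<^sub>2\<close>,
  satisfy \<open>\<Sum> e \<equiv> 0\<close>, and \<open>\<phi>\<close> reads off \<open>p\<close>. Conjugating a pure twist \<open>corner_config id v\<close> by an
  element over \<open>\<sigma>\<close> permutes the coordinates of \<open>v\<close> by \<open>\<sigma>\<close>. Since \<open>\<phi>(N)\<close> is all of \<open>S\<^sub>8\<close>, take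
  \<open>n \<in> N\<close> over the transposition (1 8) and the twist \<open>k\<close> of corners 1 and 8, an explicit word in
  the moves: then \<open>n k n\<inverse> = k\<^sup>2\<close>, which forces \<open>k \<in> N\<close>. Conjugating \<open>k\<close> over (1 x) gives the
  twists of x and 8, which generate all pure twists with \<open>\<Sum> e \<equiv> 0\<close>, i.e. the kernel of \<open>\<phi>\<close>.
  A normal subgroup containing the kernel and mapping onto the image is everything.\<close>

lemma (in group) in_normal_if_conj_eq_square:
  assumes "N \<lhd> G" and "n \<in> N" and "k \<in> carrier G" and "n \<otimes> k = k \<otimes> k \<otimes> n"
  shows "k \<in> N"
proof -
  interpret N: normal N G by (rule assms(1))
  have n: "n \<in> carrier G" using assms(2) N.subset by blast
  have "k = inv k \<otimes> n \<otimes> k \<otimes> inv n"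
    using n assms(3,4) by (simp add: inv_solve_right inv_solve_left inv_solve_left' m_assoc)
  also have "\<dots> \<in> N"
    using N.inv_op_closed1[OF assms(3,2)] N.m_inv_closed[OF assms(2)] by (rule N.m_closed)
  finally show ?thesis .
qed

lemma (in group_hom) normal_eq_carrier_if_image_eq_and_kernel_subset:
  assumes "subgroup N G" and "h ` N = h ` carrier G" and "kernel G H h \<subseteq> N"
  shows "N = carrier G"
proof
  show "N \<subseteq> carrier G" using assms(1) by (rule subgroup.subset)
next
  show "carrier G \<subseteq> N"
  proof
    fix g assume g: "g \<in> carrier G"
    then obtain n where n: "n \<in> N" "h n = h g" using assms(2) by (metis imageE imageI)
    have nG: "n \<in> carrier G" using n(1) assms(1) subgroup.subset by blast
    have "inv n \<otimes> g \<in> kernel G H h"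
      using g nG n(2) by (simp add: kernel_def hom_mult hom_inv)
    then have "n \<otimes> (inv n \<otimes> g) \<in> N"
      using assms(1,3) n(1) by (blast intro: subgroup.m_closed)
    moreover have "n \<otimes> (inv n \<otimes> g) = g" using g nG by (simp add: G.m_assoc[symmetric])
    ultimately show "g \<in> N" by simp
  qed
qed

lemma iso_carrier_update_eq:
  assumes "H\<lparr>carrier := S\<rparr> \<cong> H" and "S \<subseteq> carrier H" and "finite (carrier H)"
  shows "S = carrier H"
proof -
  obtain f where "bij_betw f S (carrier H)"
    using assms(1) by (auto simp: is_iso_def iso_def)
  then show ?thesis
    using assms(2,3) by (metis bij_betw_same_card card_subset_eq)
qed

lemma corner_cases:
  assumes "c \<in> {1..8}"
  obtains "c = 1" | "c = 2" | "c = 3" | "c = 4" | "c = 5" | "c = 6" | "c = 7" | "c = (8::nat)"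
  using assms by fastforce

lemma stickers_eq: "stickers = {(1,U),(1,Fr),(1,Lf),(2,U),(2,Fr),(2,Rt),(3,U),(3,Bk),(3,Lf),(4,U),(4,Bk),(4,Rt),
  (5,D),(5,Fr),(5,Lf),(6,D),(6,Fr),(6,Rt),(7,D),(7,Bk),(7,Lf),(8,D),(8,Bk),(8,Rt)}"
  (is "_ = ?S")
proof (intro equalityI subsetI)
  fix s assume "s \<in> stickers"
  then obtain c X where "s = (c, X)" "c \<in> {1..8}" "X \<in> corner_faces c"
    unfolding stickers_def by blast
  then show "s \<in> ?S" by (elim corner_cases) (auto simp: corner_faces_def)
qed (auto simp: stickers_def corner_faces_def)

lemma corner_faces_inj: "inj_on corner_faces {1..8}"
  by (auto simp: inj_on_def corner_faces_def insert_commute)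

lemma corner_of_corner_faces: "c \<in> {1..8} \<Longrightarrow> corner_of (corner_faces c) = c"
  unfolding corner_of_def using corner_faces_inj by (auto simp: inj_on_def)

definition layer_perm :: "face \<Rightarrow> nat \<Rightarrow> nat" where
  "layer_perm M = cycle_of_list (case M of U \<Rightarrow> [1,3,4,2] | D \<Rightarrow> [5,6,8,7] | Fr \<Rightarrow> [1,2,6,5]
     | Bk \<Rightarrow> [3,7,8,4] | Lf \<Rightarrow> [1,5,7,3] | Rt \<Rightarrow> [2,4,8,6])"

lemma rot_corner_faces:
  "c \<in> {1..8} \<Longrightarrow> M \<in> corner_faces c \<Longrightarrow> rot M ` corner_faces c = corner_faces (layer_perm M c)"
  by (erule corner_cases; cases M) (simp_all add: layer_perm_def corner_faces_def insert_commute)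

lemma layer_perm_permutes: "layer_perm M permutes {1..8}"
  unfolding layer_perm_def
  by (rule permutes_subset[OF cycle_permutes]) (cases M; auto)

lemma layer_perm_fixes: "c \<in> {1..8} \<Longrightarrow> M \<notin> corner_faces c \<Longrightarrow> layer_perm M c = c"
  by (erule corner_cases; cases M) (simp_all add: layer_perm_def corner_faces_def)

lemma move_sticker:
  assumes "(c, X) \<in> stickers"
  shows "move M (c, X) = (layer_perm M c, if M \<in> corner_faces c then rot M X else X)"
proof -
  have c: "c \<in> {1..8}" using assms by (simp add: stickers_def)
  then have "layer_perm M c \<in> {1..8}" by (simp only: permutes_in_image[OF layer_perm_permutes])
  then show ?thesis
    using assms c by (simp add: move_def rot_corner_faces corner_of_corner_faces layer_perm_fixes)
qed

text \<open>\<open>face_at c\<close> lists the faces of corner \<open>c\<close>, starting with its U or D face, in the same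
  rotational sense at every corner, so that a quarter turn raises the orientations of the three
  stickers of a cubelet by the same amount (mod 3).\<close>

definition face_at :: "nat \<Rightarrow> nat \<Rightarrow> face" where
  "face_at c j = [[U,Lf,Fr], [U,Fr,Rt], [U,Bk,Lf], [U,Rt,Bk],
                  [D,Fr,Lf], [D,Rt,Fr], [D,Lf,Bk], [D,Bk,Rt]] ! (c - 1) ! j"

definition orientation :: "nat \<times> face \<Rightarrow> nat" where
  "orientation s = (if snd s = face_at (fst s) 0 then 0 else if snd s = face_at (fst s) 1 then 1 else 2)"

definition corner_config :: "(nat \<Rightarrow> nat) \<Rightarrow> (nat \<Rightarrow> nat) \<Rightarrow> nat \<times> face \<Rightarrow> nat \<times> face" where
  "corner_config p e s = (if s \<in> stickers
     then (p (fst s), face_at (p (fst s)) ((e (fst s) + orientation s) mod 3)) else s)"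

lemma face_at_in_stickers: "c \<in> {1..8} \<Longrightarrow> j < 3 \<Longrightarrow> (c, face_at c j) \<in> stickers"
  by (elim corner_cases; auto simp: eval_nat_numeral less_Suc_eq stickers_def corner_faces_def face_at_def)

lemma orientation_face_at: "c \<in> {1..8} \<Longrightarrow> j < 3 \<Longrightarrow> orientation (c, face_at c j) = j"
  by (elim corner_cases; auto simp: eval_nat_numeral less_Suc_eq orientation_def face_at_def)

lemma face_at_orientation: "s \<in> stickers \<Longrightarrow> face_at (fst s) (orientation s) = snd s"
  by (auto simp: stickers_eq orientation_def face_at_def)

lemma orientation_lt: "orientation s < 3"
  by (simp add: orientation_def)

lemma sticker_corner: "s \<in> stickers \<Longrightarrow> fst s \<in> {1..8}"
  unfolding stickers_def by auto

lemma corner_config_comp: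
  assumes "q permutes {1..8}"
  shows "corner_config p e \<circ> corner_config q f = corner_config (p \<circ> q) (\<lambda>c. f c + e (q c))"
proof
  fix s
  show "(corner_config p e \<circ> corner_config q f) s = corner_config (p \<circ> q) (\<lambda>c. f c + e (q c)) s"
  proof (cases "s \<in> stickers")
    case True
    let ?c = "fst s" and ?j = "(f (fst s) + orientation s) mod 3"
    have "q ?c \<in> {1..8}"
      using sticker_corner[OF True] by (simp only: permutes_in_image[OF assms])
    moreover have "(e (q ?c) + ?j) mod 3 = (f ?c + e (q ?c) + orientation s) mod 3"
      by (simp add: mod_add_right_eq ac_simps)
    ultimately show ?thesis
      using True by (simp add: corner_config_def face_at_in_stickers orientation_face_at)
  qed (simp add: corner_config_def)
qed

lemma corner_config_cong:
  assumes "\<And>c. c \<in> {1..8} \<Longrightarrow> p c = q c" and "\<And>c. c \<in> {1..8} \<Longrightarrow> e c mod 3 = f c mod 3"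
  shows "corner_config p e = corner_config q f"
proof
  fix s
  show "corner_config p e s = corner_config q f s"
  proof (cases "s \<in> stickers")
    case True
    then have "fst s \<in> {1..8}" by (rule sticker_corner)
    then have "(e (fst s) + orientation s) mod 3 = (f (fst s) + orientation s) mod 3"
      using assms(2) by (metis mod_add_left_eq)
    then show ?thesis using True assms(1)[OF \<open>fst s \<in> {1..8}\<close>] by (simp add: corner_config_def)
  qed (simp add: corner_config_def)
qed

lemma corner_config_id:
  assumes "\<And>c. c \<in> {1..8} \<Longrightarrow> e c mod 3 = 0"
  shows "corner_config id e = id"
proof -
  have "corner_config id e = corner_config id (\<lambda>c. 0)"
    using assms by (intro corner_config_cong) simp_all
  also have "\<dots> = id"
    by (rule ext) (simp add: corner_config_def face_at_orientation orientation_lt)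
  finally show ?thesis .
qed

lemma phi_corner_config:
  assumes "p permutes {1..8}"
  shows "phi (corner_config p e) = p"
proof
  fix c
  show "phi (corner_config p e) c = p c"
  proof (cases "c \<in> {1..8}")
    case True
    then have "(c, if c \<le> 4 then U else D) \<in> stickers"
      by (elim corner_cases) (simp_all add: stickers_def corner_faces_def)
    then show ?thesis using True by (simp add: phi_def corner_config_def)
  next
    case False
    then show ?thesis unfolding phi_def if_not_P[OF False] using permutes_not_in[OF assms False] by simp
  qed
qed

lemma corner_config_inverse:
  assumes "p permutes {1..8}"
  shows "corner_config (inv' p) (\<lambda>c. 2 * e (inv' p c)) \<circ> corner_config p e = id"
    and "corner_config p e \<circ> corner_config (inv' p) (\<lambda>c. 2 * e (inv' p c)) = id"
  using assms permutes_inv[OF assms]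
  by (simp_all add: corner_config_comp permutes_inv_o permutes_inverses corner_config_id)

lemma corner_config_permutes:
  assumes "p permutes {1..8}"
  shows "corner_config p e permutes stickers"
proof -
  have "bij (corner_config p e)"
    using corner_config_inverse[OF assms] by (rule o_bij)
  then show ?thesis
    unfolding permutes_def bij_iff by (simp add: corner_config_def)
qed

lemma corner_config_conj:
  assumes "s permutes {1..8}"
  shows "corner_config s e \<circ> corner_config id v = corner_config id (\<lambda>c. v (inv' s c)) \<circ> corner_config s e"
  using assms by (simp add: corner_config_comp permutes_inverses add.commute)

definition layer_twist :: "face \<Rightarrow> nat \<Rightarrow> nat" where
  "layer_twist M c = orientation (move M (c, face_at c 0))"

lemma move_eq_corner_config: "move M = corner_config (layer_perm M) (layer_twist M)"
proof
  fix s
  show "move M s = corner_config (layer_perm M) (layer_twist M) s"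
  proof (cases "s \<in> stickers")
    case True
    then show ?thesis
      unfolding stickers_eq
      by (simp only: insert_iff empty_iff simp_thms; elim disjE; cases M)
        (simp_all add: move_sticker stickers_eq corner_config_def layer_twist_def face_at_def orientation_def
          layer_perm_def corner_faces_def)
  qed (simp add: move_def corner_config_def)
qed

lemma layer_twist_sum: "(\<Sum>c\<in>{1..8}. layer_twist M c) mod 3 = 0"
proof -
  have "{1..8} = {1, 2, 3, 4, 5, 6, 7, 8 :: nat}" by auto
  then show ?thesis
    by (cases M) (simp_all add: layer_twist_def move_sticker stickers_eq face_at_def
        orientation_def layer_perm_def corner_faces_def)
qed

definition balanced_configs :: "(nat \<times> face \<Rightarrow> nat \<times> face) set" where
  "balanced_configs = {corner_config p e | p e. p permutes {1..8} \<and> (\<Sum>c\<in>{1..8}. e c) mod 3 = 0}"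

lemma balanced_configsI:
  "p permutes {1..8} \<Longrightarrow> (\<Sum>c\<in>{1..8}. e c) mod 3 = 0 \<Longrightarrow> corner_config p e \<in> balanced_configs"
  unfolding balanced_configs_def by (rule CollectI exI conjI refl | assumption)+

lemma balanced_configsE:
  assumes "g \<in> balanced_configs"
  obtains p e where "g = corner_config p e" "p permutes {1..8}" "(\<Sum>c\<in>{1..8}. e c) mod 3 = 0"
  using assms unfolding balanced_configs_def by (elim CollectE exE conjE) (rule that)

lemma sticker_sym_is_group: "group sticker_sym"
  using permutes_inv permutes_inv_o(2)
  by (auto intro!: groupI simp: sticker_sym_def permutes_compose permutes_id comp_assoc, blast)

lemma balanced_configs_subgroup: "subgroup balanced_configs sticker_sym"
proof
  show "balanced_configs \<subseteq> carrier sticker_sym"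
    by (auto elim!: balanced_configsE simp: sticker_sym_def corner_config_permutes)
  show "\<one>\<^bsub>sticker_sym\<^esub> \<in> balanced_configs"
    using balanced_configsI[OF permutes_id, of "\<lambda>c. 0"] corner_config_id[of "\<lambda>c. 0"]
    by (simp add: sticker_sym_def)
next
  fix g h assume "g \<in> balanced_configs" "h \<in> balanced_configs"
  then obtain p e q f where g: "g = corner_config p e" "p permutes {1..8}" "(\<Sum>c\<in>{1..8}. e c) mod 3 = 0"
    and h: "h = corner_config q f" "q permutes {1..8}" "(\<Sum>c\<in>{1..8}. f c) mod 3 = 0"
    by (metis balanced_configsE)
  have "(\<Sum>c\<in>{1..8}. f c + e (q c)) = (\<Sum>c\<in>{1..8}. f c) + (\<Sum>c\<in>{1..8}. e c)"
    using sum.permute[OF h(2), of e] by (simp add: sum.distrib)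
  then have "(\<Sum>c\<in>{1..8}. f c + e (q c)) mod 3 = 0"
    using g(3) h(3) by (simp add: mod_add_eq[symmetric])
  then show "g \<otimes>\<^bsub>sticker_sym\<^esub> h \<in> balanced_configs"
    using g h by (simp add: sticker_sym_def corner_config_comp balanced_configsI permutes_compose)
next
  fix g assume "g \<in> balanced_configs"
  then obtain p e where g: "g = corner_config p e" "p permutes {1..8}" "(\<Sum>c\<in>{1..8}. e c) mod 3 = 0"
    by (rule balanced_configsE)
  let ?g' = "corner_config (inv' p) (\<lambda>c. 2 * e (inv' p c))"
  have "(\<Sum>c\<in>{1..8}. 2 * e (inv' p c)) = 2 * (\<Sum>c\<in>{1..8}. e c)"
    using sum.permute[OF permutes_inv[OF g(2)], of e] by (simp add: sum_distrib_left)
  then have "?g' \<in> balanced_configs"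
    using g(3) permutes_inv[OF g(2)] by (intro balanced_configsI) (simp_all add: mod_mult_right_eq[symmetric])
  moreover have "inv\<^bsub>sticker_sym\<^esub> g = ?g'"
    using g(1,2) permutes_inv[OF g(2)]
    by (intro group.inv_equality[OF sticker_sym_is_group])
      (simp_all add: sticker_sym_def corner_config_inverse corner_config_permutes)
  ultimately show "inv\<^bsub>sticker_sym\<^esub> g \<in> balanced_configs" by simp
qed

lemma move_in_balanced_configs: "move M \<in> balanced_configs"
  unfolding move_eq_corner_config by (intro balanced_configsI layer_perm_permutes layer_twist_sum)

lemma G2_subset_balanced_configs: "G2_set \<subseteq> balanced_configs"
  unfolding G2_set_def
  by (intro group.generate_subgroup_incl[OF sticker_sym_is_group] balanced_configs_subgroup)
    (auto simp: move_in_balanced_configs)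

lemma carrier_G2: "carrier G2 = G2_set" and mult_G2: "mult G2 = (\<circ>)" and one_G2: "one G2 = id"
  by (simp_all add: G2_def sticker_sym_def)

definition moves :: "face list \<Rightarrow> nat \<times> face \<Rightarrow> nat \<times> face" where
  "moves ms = foldr (\<lambda>M g. move M \<circ> g) ms id"

lemma moves_in_G2: "moves ms \<in> G2_set"
proof (induction ms)
  case Nil
  have "moves [] = \<one>\<^bsub>sticker_sym\<^esub>" by (simp add: moves_def sticker_sym_def)
  then show ?case unfolding G2_set_def by (simp only: generate.one)
next
  case (Cons M ms)
  have "move M \<in> G2_set" unfolding G2_set_def by (rule generate.incl) (cases M; simp)
  moreover have "moves (M # ms) = move M \<otimes>\<^bsub>sticker_sym\<^esub> moves ms"
    by (simp add: moves_def sticker_sym_def)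
  ultimately show ?case
    using Cons unfolding G2_set_def by (simp only: generate.eng)
qed

definition twist :: "nat \<Rightarrow> nat \<Rightarrow> nat" where
  "twist x c = (if c = x then 1 else if c = 8 then 2 else 0)"

lemma twist_1_eq_moves:
  "corner_config id (twist 1) = moves [U, U, Fr, Rt, Fr, Fr, Fr, U, Fr, Fr, Fr, U, Rt, Rt, Rt, Fr, Fr, Fr, Rt, Rt]"
  (is "?k = ?w")
proof
  fix s
  show "?k s = ?w s"
  proof (cases "s \<in> stickers")
    case True
    then show ?thesis
      unfolding stickers_eq
      by (simp only: insert_iff empty_iff simp_thms; elim disjE)
        (simp_all add: moves_def move_sticker stickers_eq corner_config_def twist_def face_at_def
          orientation_def layer_perm_def corner_faces_def)
  qed (simp add: moves_def move_def corner_config_def)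
qed

lemma phi_permutes: "g \<in> balanced_configs \<Longrightarrow> phi g permutes {1..8}"
  by (auto elim: balanced_configsE simp: phi_corner_config)

lemma phi_hom: "phi \<in> hom G2 (sym_group 8)"
proof (rule homI)
  fix g h assume "g \<in> carrier G2" "h \<in> carrier G2"
  then have "g \<in> balanced_configs" "h \<in> balanced_configs"
    using G2_subset_balanced_configs carrier_G2 by auto
  then show "phi (g \<otimes>\<^bsub>G2\<^esub> h) = phi g \<otimes>\<^bsub>sym_group 8\<^esub> phi h"
    by (auto elim!: balanced_configsE simp: mult_G2 sym_group_mult corner_config_comp
        phi_corner_config permutes_compose)
qed (use G2_subset_balanced_configs phi_permutes in \<open>auto simp: carrier_G2 sym_group_carrier\<close>)

context
  fixes N
  assumes N_normal: "N \<lhd> G2" and phi_image_N: "phi ` N = carrier (sym_group 8)"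
begin

lemma N_subset_G2: "N \<subseteq> G2_set"
  using normal_imp_subgroup[OF N_normal] subgroup.subset carrier_G2 by blast

lemma N_comp_closed: "g \<in> N \<Longrightarrow> h \<in> N \<Longrightarrow> g \<circ> h \<in> N"
  using subgroup.m_closed[OF normal_imp_subgroup[OF N_normal]] by (simp add: mult_G2)

lemma N_over_perm:
  assumes "\<sigma> permutes {1..8}"
  obtains e where "corner_config \<sigma> e \<in> N"
proof -
  obtain n where n: "n \<in> N" "phi n = \<sigma>"
    using assms phi_image_N by (metis imageE sym_group_carrier)
  then have "n \<in> balanced_configs" using N_subset_G2 G2_subset_balanced_configs by blast
  then obtain p e where "n = corner_config p e" "p permutes {1..8}" by (rule balanced_configsE)
  then show thesis using n that by (simp add: phi_corner_config)
qed

lemma twist_1_in_N: "corner_config id (twist 1) \<in> N"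
proof -
  let ?k = "corner_config id (twist 1)"
  have \<tau>: "transpose 1 8 permutes {1..8::nat}" by (rule permutes_swap_id) auto
  obtain e where n: "corner_config (transpose 1 8) e \<in> N" by (rule N_over_perm[OF \<tau>])
  have "?k \<in> carrier G2" unfolding carrier_G2 twist_1_eq_moves by (rule moves_in_G2)
  moreover have "corner_config id (\<lambda>c. twist 1 (inv' (transpose 1 8) c)) = ?k \<circ> ?k"
    by (auto simp: corner_config_comp intro!: corner_config_cong) (auto simp: twist_def transpose_def)
  ultimately show ?thesis
    using group.in_normal_if_conj_eq_square[OF normal.axioms(2)[OF N_normal] N_normal n]
      corner_config_conj[OF \<tau>]
    by (simp add: mult_G2)
qed

lemma twist_in_N:
  assumes "x \<in> {1..7}"
  shows "corner_config id (twist x) \<in> N"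
proof -
  have \<tau>: "transpose 1 x permutes {1..8}" using assms by (intro permutes_swap_id) auto
  obtain e where n: "corner_config (transpose 1 x) e \<in> N" by (rule N_over_perm[OF \<tau>])
  let ?n = "corner_config (transpose 1 x) e"
  have nG: "?n \<in> carrier G2" using n N_subset_G2 carrier_G2 by blast
  have "corner_config id (\<lambda>c. twist 1 (inv' (transpose 1 x) c)) = corner_config id (twist x)"
    using assms by (intro corner_config_cong) (auto simp: twist_def transpose_def)
  then have "?n \<circ> corner_config id (twist 1) = corner_config id (twist x) \<circ> ?n"
    using corner_config_conj[OF \<tau>] by simp
  then have "corner_config id (twist x) = ?n \<circ> corner_config id (twist 1) \<circ> inv\<^bsub>G2\<^esub> ?n"
    using group.r_inv[OF normal.axioms(2)[OF N_normal] nG] by (simp add: mult_G2 one_G2 comp_assoc)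
  also have "\<dots> \<in> N"
    using normal.inv_op_closed2[OF N_normal nG twist_1_in_N] by (simp add: mult_G2)
  finally show ?thesis .
qed

lemma id_in_N: "id \<in> N"
  using subgroup.one_closed[OF normal_imp_subgroup[OF N_normal]] by (simp add: one_G2)

lemma twist_add_in_N:
  assumes "corner_config id v \<in> N" and "corner_config id w \<in> N"
  shows "corner_config id (\<lambda>c. v c + w c) \<in> N"
proof -
  have "corner_config id v \<circ> corner_config id w = corner_config id (\<lambda>c. v c + w c)"
    using corner_config_comp[OF permutes_id, of id v w] by (simp add: add.commute)
  then show ?thesis using N_comp_closed[OF assms] by simp
qed

lemma multiple_twist_in_N: "x \<in> {1..7} \<Longrightarrow> corner_config id (\<lambda>c. j * twist x c) \<in> N"
proof (induction j)
  case 0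
  have "corner_config id (\<lambda>c. 0 * twist x c) = id" by (rule corner_config_id) simp
  then show ?case using id_in_N by (simp only:)
next
  case (Suc j)
  have "(\<lambda>c. Suc j * twist x c) = (\<lambda>c. j * twist x c + twist x c)" by auto
  then show ?case using twist_add_in_N[OF Suc.IH[OF Suc.prems] twist_in_N[OF Suc.prems]] by (simp only:)
qed

lemma twist_combination_in_N: "corner_config id (\<lambda>c. \<Sum>x\<in>{1..m}. e x * twist x c) \<in> N" if "m \<le> 7"
  using that
proof (induction m)
  case 0
  have "corner_config id (\<lambda>c. \<Sum>x\<in>{1..0}. e x * twist x c) = id" by (rule corner_config_id) simp
  then show ?case using id_in_N by (simp only:)
next
  case (Suc m)
  have "Suc m \<in> {1..7}" using Suc.prems by simp
  moreover have "(\<lambda>c. \<Sum>x\<in>{1..Suc m}. e x * twist x c)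
      = (\<lambda>c. (\<Sum>x\<in>{1..m}. e x * twist x c) + e (Suc m) * twist (Suc m) c)"
    by simp
  ultimately show ?case
    using twist_add_in_N[OF Suc.IH multiple_twist_in_N] Suc.prems by (simp only: Suc_leD)
qed

lemma balanced_twist_in_N:
  assumes "(\<Sum>c\<in>{1..8}. e c) mod 3 = 0"
  shows "corner_config id e \<in> N"
proof -
  have "corner_config id e = corner_config id (\<lambda>c. \<Sum>x\<in>{1..7}. e x * twist x c)"
  proof (rule corner_config_cong)
    fix c :: nat assume c: "c \<in> {1..8}"
    show "e c mod 3 = (\<Sum>x\<in>{1..7}. e x * twist x c) mod 3"
    proof (cases "c = 8")
      case True
      have "(\<Sum>x\<in>{1..7}. e x) + e 8 = (\<Sum>c\<in>{1..8}. e c)"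
        by (simp add: atLeastAtMostSuc_conv numeral_eq_Suc)
      moreover have "b mod 3 = (2 * a) mod 3" if "(a + b) mod 3 = 0" for a b :: nat
        using that by presburger
      ultimately have "e 8 mod 3 = (2 * (\<Sum>x\<in>{1..7}. e x)) mod 3"
        using assms by metis
      moreover have "(\<Sum>x\<in>{1..7}. e x * twist x c) = 2 * (\<Sum>x\<in>{1..7}. e x)"
        unfolding sum_distrib_left using True by (intro sum.cong) (auto simp: twist_def)
      ultimately show ?thesis using True by simp
    next
      case False
      then have "(\<Sum>x\<in>{1..7}. e x * twist x c) = (\<Sum>x\<in>{1..7}. if x = c then e x else 0)"
        by (intro sum.cong) (auto simp: twist_def)
      also have "\<dots> = e c" using c False by simp
      finally show ?thesis by simp
    qed
  qed simp
  then show ?thesis using twist_combination_in_N by simp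
qed

lemma kernel_phi_subset_N: "kernel G2 (sym_group 8) phi \<subseteq> N"
proof
  fix g assume "g \<in> kernel G2 (sym_group 8) phi"
  then have g: "g \<in> balanced_configs" "phi g = id"
    using G2_subset_balanced_configs by (auto simp: kernel_def carrier_G2 sym_group_one)
  then obtain e where "g = corner_config id e" "(\<Sum>c\<in>{1..8}. e c) mod 3 = 0"
    by (metis balanced_configsE phi_corner_config)
  then show "g \<in> N" using balanced_twist_in_N by simp
qed

end

theorem proposition2p8:
  assumes "N \<lhd> G2"
    and "N \<noteq> {\<one>\<^bsub>G2\<^esub>}"
    and "(sym_group 8)\<lparr>carrier := phi ` N\<rparr> \<cong> sym_group 8"
  shows "N = carrier G2"
proof -
  interpret phi: group_hom G2 "sym_group 8" phi
    using normal.axioms(2)[OF assms(1)] sym_group_is_group phi_hom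
    by (simp add: group_hom_def group_hom_axioms_def)
  have N_subgroup: "subgroup N G2" using assms(1) by (rule normal_imp_subgroup)
  have "phi ` N \<subseteq> phi ` carrier G2" using subgroup.subset[OF N_subgroup] by blast
  also have "\<dots> \<subseteq> carrier (sym_group 8)" using phi.hom_closed by blast
  finally have phi_N: "phi ` N = carrier (sym_group 8)"
    using assms(3) finite_permutations[of "{1..8::nat}"]
    by (intro iso_carrier_update_eq) (simp_all add: sym_group_def)
  have "phi ` N = phi ` carrier G2"
    using phi_N phi.hom_closed subgroup.subset[OF N_subgroup] by blast
  then show ?thesis
    using phi.normal_eq_carrier_if_image_eq_and_kernel_subset[OF N_subgroup]
      kernel_phi_subset_N[OF assms(1) phi_N] by blast
qed

end
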